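(* For all integers $m,n\ge 0$, $$\frac{1}{n!}D_{m+n}=\sum_{l=0}^{n}\sum_{k=0}^{m}\binom{k+n-l-1}{n-l}\binom{m}{k}(-1)^{m-k}\frac{k!}{l!}\,D_l,$$ where $D_j$ denotes the $j$-th derangement number.
   Context: For a nonnegative integer $j$, the derangement number is $D_j=j!\sum_{i=0}^{j}\frac{(-1)^i}{i!}$ (the number of permutations of a $j$-element set with no fixed points); equivalently $\frac{e^{-t}}{1-t}=\sum_{j\ge 0}D_j\frac{t^j}{j!}$. Binomial coefficients are the generalized ones: for any real (or integer, possibly negative) $a$ and integer $j\ge 0$, $\binom{a}{j}=\frac{a(a-1)\cdots(a-j+1)}{j!}$, with $\binom{a}{0}=1$; in particular $\binom{-1}{0}=1$. *)

theory Defs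
  imports Complex_Main
begin

definition derangement :: "nat \<Rightarrow> real" where
  "derangement j = fact j * (\<Sum>i=0..j. (-1) ^ i / fact i)"

end

theory Submission
  imports Defs "HOL-Computational_Algebra.Formal_Power_Series"
begin

text \<open>
  The exponential generating function of the derangement numbers is F = exp(-t) / (1 - t).
  The series A_k = k! exp(-t) / (1 - t)^(k+1) satisfy A_k' = A_(k+1) - A_k and A_0 = F, so
  differentiation acts on them as the forward difference and the m-th derivative of F is
  the sum of (-1)^(m-k) C(m,k) A_k. Its n-th coefficient is D_(m+n) / n!; on the other side
  A_k = k! F / (1 - t)^k, and the coefficients C(k + r - 1, r) of (1 - t)^(-k) turn the
  Cauchy product into the double sum.
\<close>

unbundle fps_syntax

lemma fps_nth_higher_deriv:
  fixes f :: "'a::{comm_semiring_1,semiring_char_0} fps"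
  shows "fact n * (fps_deriv ^^ m) f $ n = fact (m + n) * f $ (m + n)"
proof (induction m arbitrary: n)
  case (Suc m)
  have "fact n * (fps_deriv ^^ Suc m) f $ n = fact (Suc n) * (fps_deriv ^^ m) f $ Suc n"
    by (simp add: algebra_simps)
  also have "\<dots> = fact (Suc m + n) * f $ (Suc m + n)"
    using Suc.IH[of "Suc n"] by simp
  finally show ?case .
qed simp

lemma fps_nth_inverse_one_minus_X [simp]:
  "inverse (1 - fps_X :: 'a::division_ring fps) $ n = 1"
  by (simp add: fps_inverse_one_minus_fps_X)

lemma fps_deriv_inverse_one_minus_X:
  "fps_deriv (inverse (1 - fps_X) :: 'a::field fps) = inverse (1 - fps_X) ^ 2"
  by (rule fps_ext) (simp add: fps_mult_nth power2_eq_square)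

lemma fps_deriv_inverse_one_minus_X_power:
  "fps_deriv (inverse (1 - fps_X) ^ Suc k :: 'a::field fps) =
     of_nat (Suc k) * inverse (1 - fps_X) ^ Suc (Suc k)"
  by (simp only: fps_deriv_power' fps_deriv_inverse_one_minus_X diff_Suc_1)
     (simp add: power2_eq_square algebra_simps)

lemma fps_nth_inverse_one_minus_X_power:
  "(inverse (1 - fps_X) ^ k :: 'a::field_char_0 fps) $ r = (of_nat k + of_nat r - 1) gchoose r"
proof (induction k arbitrary: r)
  case 0
  then show ?case
    by (cases r) (simp_all add: binomial_gbinomial[symmetric])
next
  case (Suc k)
  have "(inverse (1 - fps_X) ^ Suc k :: 'a fps) $ r = (\<Sum>i\<le>r. (inverse (1 - fps_X) ^ k) $ i)"
    by (simp add: fps_mult_nth atLeast0AtMost power_Suc2 del: power_Suc)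
  also have "\<dots> = (\<Sum>i\<le>r. (of_nat k - 1 + of_nat i) gchoose i)"
    using Suc.IH by (simp add: algebra_simps)
  also have "\<dots> = (of_nat k - 1 + of_nat r + 1) gchoose r"
    by (rule gbinomial_parallel_sum)
  finally show ?case by (simp add: algebra_simps)
qed

lemma alternating_binomial_sum_difference:
  fixes x :: "nat \<Rightarrow> 'a::comm_ring_1"
  shows "(\<Sum>k=0..m. (-1)^(m-k) * of_nat (m choose k) * (x (Suc k) - x k)) =
         (\<Sum>k=0..Suc m. (-1)^(Suc m - k) * of_nat (Suc m choose k) * x k)"
proof -
  have shifted:
    "(-1)^Suc m * x 0 + (\<Sum>k=0..m. (-1)^(m - k) * of_nat (m choose Suc k) * x (Suc k)) =
     - (\<Sum>k=0..m. (-1)^(m - k) * of_nat (m choose k) * x k)"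
  proof -
    have "(-1)^Suc m * x 0 + (\<Sum>k=0..m. (-1)^(m - k) * of_nat (m choose Suc k) * x (Suc k)) =
          (\<Sum>k=0..Suc m. (-1)^(Suc m - k) * of_nat (m choose k) * x k)"
      unfolding sum.atLeast0_atMost_Suc_shift by simp
    also have "\<dots> = - (\<Sum>k=0..m. (-1)^(m - k) * of_nat (m choose k) * x k)"
      by (simp add: sum_negf[symmetric] Suc_diff_le binomial_eq_0)
    finally show ?thesis .
  qed
  have "(\<Sum>k=0..Suc m. (-1)^(Suc m - k) * of_nat (Suc m choose k) * x k) =
        (-1)^Suc m * x 0 + (\<Sum>k=0..m. (-1)^(m - k) * of_nat (Suc m choose Suc k) * x (Suc k))"
    unfolding sum.atLeast0_atMost_Suc_shift by simp
  also have "\<dots> = ((-1)^Suc m * x 0 +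
                    (\<Sum>k=0..m. (-1)^(m - k) * of_nat (m choose Suc k) * x (Suc k))) +
                   (\<Sum>k=0..m. (-1)^(m - k) * of_nat (m choose k) * x (Suc k))"
    by (simp add: sum.distrib algebra_simps)
  also have "\<dots> = (\<Sum>k=0..m. (-1)^(m-k) * of_nat (m choose k) * (x (Suc k) - x k))"
    unfolding shifted by (simp add: sum_subtractf algebra_simps)
  finally show ?thesis ..
qed

lemma fps_higher_deriv_difference_sequence:
  fixes a :: "nat \<Rightarrow> 'a::comm_ring_1 fps"
  assumes "\<And>k. fps_deriv (a k) = a (Suc k) - a k"
  shows "(fps_deriv ^^ m) (a 0) = (\<Sum>k=0..m. (-1)^(m-k) * of_nat (m choose k) * a k)"
proof (induction m)
  case (Suc m)
  have "(fps_deriv ^^ Suc m) (a 0) =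
        (\<Sum>k=0..m. (-1)^(m-k) * of_nat (m choose k) * (a (Suc k) - a k))"
    by (simp add: Suc.IH fps_deriv_sum assms fps_deriv_power)
  then show ?case
    by (simp only: alternating_binomial_sum_difference)
qed simp

lemma fps_nth_sign_mult: "((-1) ^ j * f) $ n = (-1) ^ j * (f $ n :: 'a::comm_ring_1)"
  by (cases "even j") simp_all

definition derangement_egf :: "real fps" where
  "derangement_egf = inverse (1 - fps_X) * fps_exp (-1)"

lemma derangement_egf_nth: "derangement_egf $ n = derangement n / fact n"
proof -
  have "derangement_egf $ n = (\<Sum>i=0..n. fps_exp (-1) $ (n - i))"
    by (simp add: derangement_egf_def fps_mult_nth)
  also have "\<dots> = (\<Sum>i=0..n. fps_exp (-1) $ i)"
    by (subst sum.atLeastAtMost_rev) (auto intro!: sum.cong)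
  also have "\<dots> = derangement n / fact n"
    by (simp add: derangement_def)
  finally show ?thesis .
qed

text \<open>The k-th derivative of 1 / (1 - t), times exp(-t).\<close>

definition derangement_egf_term :: "nat \<Rightarrow> real fps" where
  "derangement_egf_term k = fact k * inverse (1 - fps_X) ^ k * derangement_egf"

lemma fps_deriv_derangement_egf_term:
  "fps_deriv (derangement_egf_term k) = derangement_egf_term (Suc k) - derangement_egf_term k"
proof -
  define G :: "real fps" where "G = inverse (1 - fps_X)"
  have deriv_fact: "fps_deriv (fact k :: real fps) = 0"
    by (metis fps_deriv_of_nat of_nat_fact)
  have deriv_exp: "fps_deriv (fps_exp (-1) :: real fps) = - fps_exp (-1)"
    by (simp add: fps_const_neg[symmetric] del: fps_const_neg)
  have "derangement_egf_term k = fact k * G ^ Suc k * fps_exp (-1)" for k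
    by (simp add: derangement_egf_term_def derangement_egf_def G_def algebra_simps)
  moreover have "fps_deriv (fact k * G ^ Suc k * fps_exp (-1)) =
      fact (Suc k) * G ^ Suc (Suc k) * fps_exp (-1) - fact k * G ^ Suc k * fps_exp (-1)"
    unfolding G_def fact_Suc
    by (simp only: fps_deriv_mult fps_deriv_inverse_one_minus_X_power deriv_fact deriv_exp) algebra
  ultimately show ?thesis
    by simp
qed

lemma derangement_egf_term_nth:
  "derangement_egf_term k $ n =
     fact k * (\<Sum>l=0..n.
       ((real k + real n - real l - 1) gchoose (n - l)) * derangement l / fact l)"
proof -
  have fact_mult_nth: "(fact k * f :: real fps) $ n = fact k * f $ n" for f
    by (metis fps_mult_of_nat_nth(1) of_nat_fact)
  have "derangement_egf_term k $ n =
      fact k * (\<Sum>l=0..n. derangement_egf $ l * (inverse (1 - fps_X) ^ k) $ (n - l))"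
    unfolding derangement_egf_term_def mult.assoc fact_mult_nth
    by (simp only: mult.commute[of "inverse (1 - fps_X) ^ k"] fps_mult_nth[of derangement_egf])
  also have "\<dots> = fact k * (\<Sum>l=0..n.
      ((real k + real n - real l - 1) gchoose (n - l)) * derangement l / fact l)"
    by (intro arg_cong[where f = "(*) (fact k)"] sum.cong)
       (simp_all add: derangement_egf_nth fps_nth_inverse_one_minus_X_power of_nat_diff add_diff_eq)
  finally show ?thesis .
qed

theorem theorem2p1:
  fixes m n :: nat
  shows "derangement (m + n) / fact n =
    (\<Sum>l=0..n. \<Sum>k=0..m.
       ((real k + real n - real l - 1) gchoose (n - l)) * real (m choose k) * (-1) ^ (m - k)
       * fact k / fact l * derangement l)"
proof -
  have "derangement (m + n) / fact n = (fps_deriv ^^ m) derangement_egf $ n"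
    using fps_nth_higher_deriv[of n m derangement_egf] derangement_egf_nth[of "m + n"]
    by (simp add: field_simps)
  also have "\<dots> = (\<Sum>k=0..m. (-1)^(m-k) * of_nat (m choose k) * derangement_egf_term k) $ n"
    using fps_higher_deriv_difference_sequence[of derangement_egf_term,
                                               OF fps_deriv_derangement_egf_term]
    by (simp add: derangement_egf_term_def)
  also have "\<dots> = (\<Sum>k=0..m. (-1)^(m-k) * real (m choose k) * derangement_egf_term k $ n)"
    by (simp add: fps_sum_nth fps_nth_sign_mult mult.assoc)
  also have "\<dots> = (\<Sum>k=0..m. \<Sum>l=0..n.
       ((real k + real n - real l - 1) gchoose (n - l)) * real (m choose k) * (-1) ^ (m - k)
       * fact k / fact l * derangement l)"
    by (simp add: derangement_egf_term_nth sum_distrib_left algebra_simps)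
  finally show ?thesis
    by (simp only: sum.swap[of _ "{0..m}"])
qed

end
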